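(* Let f1 and f2 be two point agents in the plane, each moving with a constant nonzero velocity, such that their straight-line trajectories are not parallel and hence intersect in a single point $P$. Let $t_1$ and $t_2$ be the times at which f1 and f2 respectively pass through $P$, and suppose $t_1>t_2$ (f1 reaches the intersection after f2). Then f1 perceives generalized regressive motion (GRM) from f2 at all times $t<t_2$.
   Context: Each agent is a point (center of projection) with a heading equal to the direction of its velocity. For observer f1 and observed f2, let $\phi_{21}(t)\in[-\pi,\pi)$ be the azimuthal position of f2 as seen from f1, measured relative to f1's heading: $\phi=0$ is straight ahead, positive angles are to the observer's left (counterclockwise) and negative to its right; $\dot\phi_{21}$ is its time derivative. Fix the Contralateral Visual Angle $\mathrm{CVA}\in[0,\pi]$ (the angular distance of the nasal boundary of each eye's visual field from the straight-ahead direction). f1 perceives GRM from f2 at time $t$ if and only if either $\dot\phi_{21}(t)>0$ and $\phi_{21}(t)\in[-\pi,\mathrm{CVA}]$, or $\dot\phi_{21}(t)<0$ and $\phi_{21}(t)\in[-\mathrm{CVA},\pi]$. *)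

theory Defs
  imports "HOL-Analysis.Analysis"
begin

text \<open>The plane is modelled as the complex numbers. An agent moving with constant
velocity v starting (at time 0) at x has position x + t v at time t; its heading is v.\<close>

definition pos :: "complex \<Rightarrow> complex \<Rightarrow> real \<Rightarrow> complex" where
  "pos x v t = x + of_real t * v"

text \<open>Angle of z in the interval [-pi, pi) (Arg has range (-pi, pi]).\<close>
definition ang :: "complex \<Rightarrow> real" where
  "ang z = (if Arg z = pi then - pi else Arg z)"

text \<open>phi_21(t): azimuthal position of f2 as seen from f1, relative to f1's heading v1,
counterclockwise (left) positive, in [-pi, pi).\<close>
definition phi21 :: "complex \<Rightarrow> complex \<Rightarrow> complex \<Rightarrow> complex \<Rightarrow> real \<Rightarrow> real" where
  "phi21 x1 v1 x2 v2 t = ang ((pos x2 v2 t - pos x1 v1 t) / v1)"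

text \<open>d is the time derivative of phi_21 at t, i.e. the derivative of (any continuous
lift of) the angle: the unit vector cis(phi) has derivative i d cis(phi t).  This agrees
with the ordinary derivative of phi_21 away from the branch cut phi = -pi.\<close>
definition phi21_rate :: "complex \<Rightarrow> complex \<Rightarrow> complex \<Rightarrow> complex \<Rightarrow> real \<Rightarrow> real \<Rightarrow> bool" where
  "phi21_rate x1 v1 x2 v2 t d \<longleftrightarrow>
     ((\<lambda>s. cis (phi21 x1 v1 x2 v2 s)) has_vector_derivative
        (\<i> * of_real d * cis (phi21 x1 v1 x2 v2 t))) (at t)"

definition GRM_cond :: "real \<Rightarrow> real \<Rightarrow> real \<Rightarrow> bool" where
  "GRM_cond CVA phi dphi \<longleftrightarrow>
     (dphi > 0 \<and> phi \<in> {-pi..CVA}) \<or> (dphi < 0 \<and> phi \<in> {-CVA..pi})"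

text \<open>f1 perceives GRM from f2 at time t: the agents are at distinct positions (so the
bearing is defined), phi_21 is differentiable at t and the GRM condition holds.\<close>
definition perceives_GRM :: "real \<Rightarrow> complex \<Rightarrow> complex \<Rightarrow> complex \<Rightarrow> complex \<Rightarrow> real \<Rightarrow> bool" where
  "perceives_GRM CVA x1 v1 x2 v2 t \<longleftrightarrow>
     pos x1 v1 t \<noteq> pos x2 v2 t \<and>
     (\<exists>d. phi21_rate x1 v1 x2 v2 t d \<and> GRM_cond CVA (phi21 x1 v1 x2 v2 t) d)"

end

theory Submission
  imports Defs
begin

text \<open>In f1's frame, rotated so that its heading is the positive real axis, f2 sits at
  w(s) = (t1 - s) - (t2 - s) u with u = v2/v1, so Im w(s) = (s - t2) Im u.  The bearing
  phi = ang w moves at rate Im (cnj w w') / |w|^2, and Im (cnj w w') = (t1 - t2) Im u is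
  constant.  Before t2 the bearing and its rate therefore have opposite signs: f2 is on one
  side and drifts back towards the other, which is GRM for every CVA \<ge> 0.\<close>

lemma norm_has_real_derivative:
  fixes w :: "real \<Rightarrow> 'a::real_inner"
  assumes "(w has_vector_derivative w') (at t)" and "w t \<noteq> 0"
  shows "((\<lambda>s. norm (w s)) has_real_derivative w' \<bullet> sgn (w t)) (at t)"
proof -
  have "((\<lambda>s. norm (w s)) has_derivative (\<lambda>h. (h *\<^sub>R w') \<bullet> sgn (w t))) (at t)"
    using has_derivative_compose[OF assms(1)[unfolded has_vector_derivative_def]
        has_derivative_norm[OF assms(2)]]
    by (simp add: o_def)
  thus ?thesis
    unfolding has_field_derivative_def by (rule has_derivative_eq_rhs) (simp add: fun_eq_iff)
qed

lemma sgn_has_vector_derivative: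
  fixes w :: "real \<Rightarrow> 'a::real_inner"
  assumes w: "(w has_vector_derivative w') (at t)" and nz: "w t \<noteq> 0"
  shows "((\<lambda>s. sgn (w s)) has_vector_derivative
           inverse (norm (w t)) *\<^sub>R (w' - (w' \<bullet> sgn (w t)) *\<^sub>R sgn (w t))) (at t)"
proof -
  have "((\<lambda>s. inverse (norm (w s)) *\<^sub>R w s) has_vector_derivative
          inverse (norm (w t)) *\<^sub>R w' + (- (w' \<bullet> sgn (w t)) / (norm (w t))\<^sup>2) *\<^sub>R w t) (at t)"
    using nz
    by (auto intro!: derivative_eq_intros norm_has_real_derivative[OF w nz] w
             simp: power2_eq_square divide_inverse)
  moreover have "inverse (norm (w t)) *\<^sub>R w' + (- (w' \<bullet> sgn (w t)) / (norm (w t))\<^sup>2) *\<^sub>R w t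
      = inverse (norm (w t)) *\<^sub>R (w' - (w' \<bullet> sgn (w t)) *\<^sub>R sgn (w t))"
    using nz by (simp add: sgn_div_norm power2_eq_square algebra_simps divide_inverse)
  ultimately show ?thesis
    by (simp add: sgn_div_norm divide_inverse_commute)
qed

lemma complex_sgn_has_vector_derivative:
  fixes w :: "real \<Rightarrow> complex"
  assumes w: "(w has_vector_derivative w') (at t)" and nz: "w t \<noteq> 0"
  shows "((\<lambda>s. sgn (w s)) has_vector_derivative
           \<i> * of_real (Im (cnj (w t) * w') / (cmod (w t))\<^sup>2) * sgn (w t)) (at t)"
proof -
  define u where "u = sgn (w t)"
  define c where "c = cnj u * w'"
  have "cnj u * u = 1"
    using nz by (simp add: u_def complex_norm_square[symmetric] norm_sgn mult.commute)
  then have "w' - (w' \<bullet> u) *\<^sub>R u = (c - of_real (Re c)) * u"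
    by (simp add: c_def inner_complex_def scaleR_conv_of_real algebra_simps)
  also have "\<dots> = \<i> * of_real (Im c) * u"
    by (simp add: complex_eq_iff)
  finally have tangential: "w' - (w' \<bullet> u) *\<^sub>R u = \<i> * of_real (Im c) * u" .
  have "Im c / cmod (w t) = Im (cnj (w t) * w') / (cmod (w t))\<^sup>2"
    using nz by (simp add: c_def u_def sgn_div_norm scaleR_conv_of_real power2_eq_square field_simps)
  moreover have "inverse (cmod (w t)) *\<^sub>R (w' - (w' \<bullet> u) *\<^sub>R u)
      = \<i> * of_real (Im c / cmod (w t)) * u"
    unfolding tangential by (simp add: scaleR_conv_of_real divide_inverse ac_simps)
  ultimately show ?thesis using sgn_has_vector_derivative[OF w nz] by (simp add: u_def)
qed

lemma cis_ang: "z \<noteq> 0 \<Longrightarrow> cis (ang z) = sgn z"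
  by (auto simp: ang_def cis_Arg[symmetric] complex_eq_iff)

lemma ang_bounded: "- pi \<le> ang z \<and> ang z \<le> pi"
  using Arg_bounded[of z] by (auto simp: ang_def)

lemma ang_eq_Arg: "Im z \<noteq> 0 \<Longrightarrow> ang z = Arg z"
  by (simp add: ang_def Arg_eq_pi)

lemma ang_mult_neg_iff:
  assumes "Im z \<noteq> 0"
  shows "ang z * x < 0 \<longleftrightarrow> Im z * x < 0"
proof -
  have "ang z < 0 \<longleftrightarrow> Im z < 0" and "ang z > 0 \<longleftrightarrow> Im z > 0"
    using assms Arg_neg_iff[of z] Arg_lt_pi[of z] Arg_bounded[of z]
    by (auto simp: ang_eq_Arg)
  thus ?thesis by (auto simp: mult_less_0_iff)
qed

lemma GRM_cond_opposite_signs: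
  assumes "- pi \<le> phi" and "phi \<le> pi" and "0 \<le> CVA" and "phi * d < 0"
  shows "GRM_cond CVA phi d"
  using assms by (auto simp: GRM_cond_def mult_less_0_iff)

lemma phi21_rate_relative_position:
  assumes "v1 \<noteq> 0" and "pos x1 v1 t \<noteq> pos x2 v2 t"
  defines "w \<equiv> \<lambda>s. (pos x2 v2 s - pos x1 v1 s) / v1"
  shows "phi21_rate x1 v1 x2 v2 t (Im (cnj (w t) * ((v2 - v1) / v1)) / (cmod (w t))\<^sup>2)"
  unfolding phi21_rate_def
proof (rule has_vector_derivative_transform_within_open)
  have bearing: "cis (phi21 x1 v1 x2 v2 s) = sgn (w s)" if "w s \<noteq> 0" for s
    using that by (simp add: phi21_def w_def cis_ang)
  have "(w has_vector_derivative (v2 - v1) / v1) (at t)"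
    unfolding w_def pos_def by (rule derivative_eq_intros refl)+ (simp add: diff_divide_distrib)
  moreover have "w t \<noteq> 0"
    using assms by (simp add: w_def)
  ultimately show "((\<lambda>s. sgn (w s)) has_vector_derivative
      \<i> * of_real (Im (cnj (w t) * ((v2 - v1) / v1)) / (cmod (w t))\<^sup>2) *
        cis (phi21 x1 v1 x2 v2 t)) (at t)"
    using complex_sgn_has_vector_derivative bearing by presburger
  show "open {s. w s \<noteq> 0}"
    unfolding w_def pos_def using assms(1) by (intro open_Collect_neq continuous_intros) auto
  show "t \<in> {s. w s \<noteq> 0}"
    using assms by (simp add: w_def)
  show "sgn (w s) = cis (phi21 x1 v1 x2 v2 s)" if "s \<in> {s. w s \<noteq> 0}" for s
    using that bearing by simp
qed

lemma relative_position_crossing: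
  assumes "v1 \<noteq> 0" and "pos x1 v1 t1 = P" and "pos x2 v2 t2 = P"
  shows "(pos x2 v2 s - pos x1 v1 s) / v1 = of_real (t1 - s) - of_real (t2 - s) * (v2 / v1)"
proof -
  have "x1 = P - of_real t1 * v1" and "x2 = P - of_real t2 * v2"
    using assms(2,3) by (auto simp: pos_def algebra_simps)
  thus ?thesis
    using assms(1) by (simp add: pos_def field_simps)
qed

lemma Im_crossing_mult_Im_rate_neg:
  fixes u :: complex
  assumes "Im u \<noteq> 0" and "t < t2" and "t2 < t1"
  defines "w \<equiv> of_real (t1 - t) - of_real (t2 - t) * u"
  shows "Im w * Im (cnj w * (u - 1)) < 0"
proof -
  have "Im w * Im (cnj w * (u - 1)) = (t - t2) * (t1 - t2) * (Im u)\<^sup>2"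
    by (simp add: w_def algebra_simps power2_eq_square)
  also have "\<dots> < 0"
    using assms(1-3) by (intro mult_neg_pos) (auto simp: mult_neg_pos)
  finally show ?thesis .
qed

theorem theorem5:
  fixes x1 v1 x2 v2 P :: complex and t1 t2 CVA :: real
  assumes "v1 \<noteq> 0" and "v2 \<noteq> 0"
    and "Im (cnj v1 * v2) \<noteq> 0"
    and "pos x1 v1 t1 = P" and "pos x2 v2 t2 = P"
    and "t1 > t2"
    and "0 \<le> CVA" and "CVA \<le> pi"
  shows "\<forall>t < t2. perceives_GRM CVA x1 v1 x2 v2 t"
proof (intro allI impI)
  fix t assume "t < t2"
  define u where "u = v2 / v1"
  define w where "w = (pos x2 v2 t - pos x1 v1 t) / v1"
  define d where "d = Im (cnj w * ((v2 - v1) / v1)) / (cmod w)\<^sup>2"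
  have "Im u \<noteq> 0"
    using assms(1,3) by (simp add: u_def Im_divide' mult.commute)
  moreover have "w = of_real (t1 - t) - of_real (t2 - t) * u"
    unfolding w_def u_def using relative_position_crossing assms(1,4,5) .
  moreover have "(v2 - v1) / v1 = u - 1"
    using assms(1) by (simp add: u_def diff_divide_distrib)
  ultimately have rate_sign: "Im w * Im (cnj w * ((v2 - v1) / v1)) < 0"
    using Im_crossing_mult_Im_rate_neg \<open>t < t2\<close> assms(6) by simp
  then have "Im w \<noteq> 0" by auto
  have "Im w * d = Im w * Im (cnj w * ((v2 - v1) / v1)) / (cmod w)\<^sup>2"
    by (simp only: d_def times_divide_eq_right)
  also have "\<dots> < 0"
    using rate_sign \<open>Im w \<noteq> 0\<close> by (intro divide_neg_pos) auto
  finally have "phi21 x1 v1 x2 v2 t * d < 0"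
    using \<open>Im w \<noteq> 0\<close> by (simp add: phi21_def w_def[symmetric] ang_mult_neg_iff)
  then have "GRM_cond CVA (phi21 x1 v1 x2 v2 t) d"
    using ang_bounded assms(7) by (intro GRM_cond_opposite_signs) (auto simp: phi21_def)
  moreover have apart: "pos x1 v1 t \<noteq> pos x2 v2 t"
    using \<open>Im w \<noteq> 0\<close> by (auto simp: w_def)
  ultimately show "perceives_GRM CVA x1 v1 x2 v2 t"
    using phi21_rate_relative_position[OF assms(1) apart]
    unfolding perceives_GRM_def w_def d_def by blast
qed

end
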